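(* Let $d\ge2$ and let $\mathcal{T}_d$ be the channel on a $d$-dimensional system given by $\mathcal{T}_d(\rho)=\mathrm{Tr}(\rho)|0\rangle\langle0|$. Then for $1/d^2\le t\le 1$, $$\mathcal{O}_t(\mathcal{T}_d)=\begin{cases}\frac1d & \text{if } \frac1d\le t\le1,\\ \frac{1}{d^2}\Big(1+\sqrt{(td^2-1)(d-1)}\Big) & \text{if } \frac1{d^2}\le t\le\frac1d.\end{cases}$$ An optimizer is $|0\rangle\langle0|_r\otimes\rho_a$ for any density operator $\rho_a$ with $\mathrm{Tr}(\rho_a^2)\le t$ when $1/d\le t\le1$, and $(1-k)\frac{I_{ra}}{d^2}+k\,|0\rangle\langle0|_r\otimes\frac{I_a}{d}$ with $k=\sqrt{\frac{td^2-1}{d-1}}$ when $1/d^2\le t\le 1/d$.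
   Context: For a channel $\mathcal{N}:\mathcal{L}(\mathcal{H}_a)\to\mathcal{L}(\mathcal{H}_b)$ with $\dim\mathcal{H}_a=\dim\mathcal{H}_b=\dim\mathcal{H}_r=d$, define $\mathcal{O}_t(\mathcal{N})=\max\{\langle\phi_{rb}|(\mathrm{id}_r\otimes\mathcal{N})(\rho_{ra})|\phi_{rb}\rangle:\ \rho_{ra}\succeq0,\ \mathrm{Tr}\rho_{ra}=1,\ \mathrm{Tr}(\rho_{ra}^2)\le t\}$, where $|\phi_{rb}\rangle=\frac{1}{\sqrt d}\sum_i|\alpha_i\rangle_r\otimes|\alpha_i\rangle_b$ is maximally entangled for an orthonormal basis $\{|\alpha_i\rangle\}$ with $|0\rangle$ one of its elements. *)

theory Defs
  imports "Jordan_Normal_Form.Matrix" "Jordan_Normal_Form.Conjugate"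
begin

definition mtrace :: "complex mat \<Rightarrow> complex" where
  "mtrace A = (\<Sum>i<dim_row A. A $$ (i, i))"

text \<open>Positive semidefinite n x n complex matrices (complex order: 0 \<le> z means z real, nonnegative).\<close>
definition psd :: "nat \<Rightarrow> complex mat \<Rightarrow> bool" where
  "psd n A \<longleftrightarrow> A \<in> carrier_mat n n \<and> (\<forall>v \<in> carrier_vec n. 0 \<le> (A *\<^sub>v v) \<bullet>c v)"

definition density :: "nat \<Rightarrow> complex mat \<Rightarrow> bool" where
  "density n \<rho> \<longleftrightarrow> psd n \<rho> \<and> mtrace \<rho> = 1"

text \<open>Kronecker (tensor) product; index i of A \<otimes> B corresponds to (i div dim B, i mod dim B).\<close>
definition kron :: "complex mat \<Rightarrow> complex mat \<Rightarrow> complex mat" where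
  "kron A B = mat (dim_row A * dim_row B) (dim_col A * dim_col B)
     (\<lambda>(i,j). A $$ (i div dim_row B, j div dim_col B) * B $$ (i mod dim_row B, j mod dim_col B))"

definition block :: "nat \<Rightarrow> complex mat \<Rightarrow> nat \<Rightarrow> nat \<Rightarrow> complex mat" where
  "block d \<rho> p q = mat d d (\<lambda>(k,l). \<rho> $$ (p * d + k, q * d + l))"

definition id_tensor :: "nat \<Rightarrow> (complex mat \<Rightarrow> complex mat) \<Rightarrow> complex mat \<Rightarrow> complex mat" where
  "id_tensor d N \<rho> = mat (d * d) (d * d)
     (\<lambda>(i,j). N (block d \<rho> (i div d) (j div d)) $$ (i mod d, j mod d))"

definition orthonormal_basis :: "nat \<Rightarrow> (nat \<Rightarrow> complex vec) \<Rightarrow> bool" where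
  "orthonormal_basis d \<alpha> \<longleftrightarrow> (\<forall>i<d. \<alpha> i \<in> carrier_vec d) \<and>
     (\<forall>i<d. \<forall>j<d. \<alpha> i \<bullet>c \<alpha> j = (if i = j then 1 else 0))"

definition max_ent :: "nat \<Rightarrow> (nat \<Rightarrow> complex vec) \<Rightarrow> complex vec" where
  "max_ent d \<alpha> = vec (d * d)
     (\<lambda>i. (\<Sum>k<d. \<alpha> k $ (i div d) * \<alpha> k $ (i mod d)) / complex_of_real (sqrt (real d)))"

definition ent_fidelity :: "nat \<Rightarrow> (complex mat \<Rightarrow> complex mat) \<Rightarrow> (nat \<Rightarrow> complex vec) \<Rightarrow> complex mat \<Rightarrow> real" where
  "ent_fidelity d N \<alpha> \<rho> = Re ((id_tensor d N \<rho> *\<^sub>v max_ent d \<alpha>) \<bullet>c max_ent d \<alpha>)"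

definition feasible :: "nat \<Rightarrow> real \<Rightarrow> complex mat \<Rightarrow> bool" where
  "feasible d t \<rho> \<longleftrightarrow> density (d * d) \<rho> \<and> mtrace (\<rho> * \<rho>) \<le> complex_of_real t"

definition O_t :: "nat \<Rightarrow> (complex mat \<Rightarrow> complex mat) \<Rightarrow> (nat \<Rightarrow> complex vec) \<Rightarrow> real \<Rightarrow> real" where
  "O_t d N \<alpha> t = Sup {ent_fidelity d N \<alpha> \<rho> | \<rho>. feasible d t \<rho>}"

definition proj0 :: "nat \<Rightarrow> complex mat" where
  "proj0 d = mat d d (\<lambda>(i,j). if i = 0 \<and> j = 0 then 1 else 0)"

definition T_chan :: "nat \<Rightarrow> complex mat \<Rightarrow> complex mat" where
  "T_chan d \<rho> = mtrace \<rho> \<cdot>\<^sub>m proj0 d"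

end

theory Submission
  imports Defs "HOL-Analysis.Convex"
begin

text \<open>
  The channel forgets its input and prepares \<open>|0\<rangle>\<close>, so \<open>(id \<otimes> T\<^sub>d)(\<rho>) = Tr\<^sub>a \<rho> \<otimes> |0\<rangle>\<langle>0|\<close>.
  Because \<open>|0\<rangle>\<close> is one of the basis vectors defining \<open>|\<phi>\<rangle>\<close>, the overlap with \<open>|\<phi>\<rangle>\<close> is
  \<open>w / d\<close>, where \<open>w = Tr ((|0\<rangle>\<langle>0| \<otimes> I) \<rho>)\<close> is the weight of \<open>\<rho>\<close> on the block \<open>r = 0\<close>.
  The diagonal \<open>y\<close> of \<open>\<rho>\<close> is a probability vector with \<open>\<Sum> y\<^sub>i\<^sup>2 \<le> Tr \<rho>\<^sup>2 \<le> t\<close>, and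
  Cauchy-Schwarz applied separately to the \<open>d\<close> entries inside the block and the \<open>d\<^sup>2 - d\<close>
  entries outside it gives \<open>(d w - 1)\<^sup>2 \<le> (t d\<^sup>2 - 1)(d - 1)\<close>, besides \<open>w \<le> 1\<close>.
  Both bounds are attained by the diagonal states \<open>(1 - k) I/d\<^sup>2 + k |0\<rangle>\<langle>0| \<otimes> I/d\<close>,
  the second one for the \<open>k\<close> that makes the purity exactly \<open>t\<close>.
\<close>

lemma sum_sum_restrict:
  fixes f :: "nat \<Rightarrow> nat \<Rightarrow> 'a::comm_monoid_add"
  assumes "S \<subseteq> {..<n}" and "\<And>i j. i < n \<Longrightarrow> j < n \<Longrightarrow> i \<notin> S \<or> j \<notin> S \<Longrightarrow> f i j = 0"
  shows "(\<Sum>i<n. \<Sum>j<n. f i j) = (\<Sum>i\<in>S. \<Sum>j\<in>S. f i j)"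
proof -
  have "(\<Sum>i<n. \<Sum>j<n. f i j) = (\<Sum>i\<in>S. \<Sum>j<n. f i j)"
    by (rule sum.mono_neutral_right) (use assms in auto)
  also have "\<dots> = (\<Sum>i\<in>S. \<Sum>j\<in>S. f i j)"
    by (intro sum.cong refl sum.mono_neutral_right) (use assms in auto)
  finally show ?thesis .
qed

lemma quadratic_form_expand:
  fixes A :: "complex mat"
  assumes "A \<in> carrier_mat n n" and "v \<in> carrier_vec n"
  shows "(A *\<^sub>v v) \<bullet>c v = (\<Sum>i<n. \<Sum>j<n. A $$ (i,j) * v $ j * cnj (v $ i))"
  using assms
  by (auto simp: scalar_prod_def row_def sum_distrib_right lessThan_atLeast0 intro!: sum.cong)

lemma mtrace_square:
  fixes A :: "complex mat"
  assumes "A \<in> carrier_mat n n"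
  shows "mtrace (A * A) = (\<Sum>i<n. \<Sum>j<n. A $$ (i,j) * A $$ (j,i))"
  using assms unfolding mtrace_def
  by (auto simp: scalar_prod_def row_def col_def lessThan_atLeast0 intro!: sum.cong)

lemma psd_diag_nonneg:
  assumes "psd n A" and "i < n"
  shows "0 \<le> A $$ (i,i)"
proof -
  have A: "A \<in> carrier_mat n n" using assms(1) unfolding psd_def by simp
  have "(A *\<^sub>v unit_vec n i) \<bullet>c unit_vec n i = A $$ (i,i)"
    by (subst quadratic_form_expand[OF A], simp, subst sum_sum_restrict[where S = "{i}"])
       (use assms(2) in auto)
  then show ?thesis using assms unfolding psd_def by (metis unit_vec_carrier)
qed

lemma psd_hermitian:
  assumes "psd n A" and "i < n" and "j < n"
  shows "A $$ (j,i) = cnj (A $$ (i,j))"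
proof (cases "i = j")
  case True
  then show ?thesis
    using psd_diag_nonneg[OF assms(1,2)] by (simp add: less_eq_complex_def complex_eq_iff)
next
  case False
  have A: "A \<in> carrier_mat n n" using assms(1) unfolding psd_def by simp
  txt \<open>Positivity on \<open>e\<^sub>i + e\<^sub>j\<close> and \<open>e\<^sub>i + \<i> e\<^sub>j\<close> makes \<open>A\<^sub>i\<^sub>j + A\<^sub>j\<^sub>i\<close> and \<open>\<i> (A\<^sub>i\<^sub>j - A\<^sub>j\<^sub>i)\<close> real.\<close>
  define v where "v c = vec n (\<lambda>l. if l = i then 1 else if l = j then c else 0)" for c :: complex
  have form: "(A *\<^sub>v v c) \<bullet>c v c = A $$ (i,i) + A $$ (i,j) * c + A $$ (j,i) * cnj c + A $$ (j,j) * c * cnj c"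
    for c
    by (subst quadratic_form_expand[OF A], simp add: v_def, subst sum_sum_restrict[where S = "{i,j}"])
       (use assms False in \<open>auto simp: v_def\<close>)
  have "0 \<le> (A *\<^sub>v v c) \<bullet>c v c" for c
    using assms(1) unfolding psd_def v_def by simp
  from this[of 1] this[of \<i>] psd_diag_nonneg[OF assms(1,2)] psd_diag_nonneg[OF assms(1,3)]
  show ?thesis unfolding form by (auto simp: less_eq_complex_def complex_eq_iff)
qed

lemma psd_sum_diag_squares_le_trace_square:
  assumes "psd n A"
  shows "(\<Sum>i<n. (Re (A $$ (i,i)))\<^sup>2) \<le> Re (mtrace (A * A))"
proof -
  have A: "A \<in> carrier_mat n n" using assms unfolding psd_def by simp
  have "(Re (A $$ (i,i)))\<^sup>2 \<le> (\<Sum>j<n. Re (A $$ (i,j) * A $$ (j,i)))" if "i < n" for i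
  proof -
    have "0 \<le> Re (A $$ (i,j) * A $$ (j,i))" if "j < n" for j
      using psd_hermitian[OF assms \<open>i < n\<close> that] by (simp add: complex_mult_cnj)
    then have "Re (A $$ (i,i) * A $$ (i,i)) \<le> (\<Sum>j<n. Re (A $$ (i,j) * A $$ (j,i)))"
      using \<open>i < n\<close> by (intro member_le_sum[where f = "\<lambda>j. Re (A $$ (i,j) * A $$ (j,i))"]) auto
    moreover have "Im (A $$ (i,i)) = 0"
      using psd_diag_nonneg[OF assms that] by (simp add: less_eq_complex_def)
    ultimately show ?thesis by (simp add: power2_eq_square)
  qed
  then have "(\<Sum>i<n. (Re (A $$ (i,i)))\<^sup>2) \<le> (\<Sum>i<n. \<Sum>j<n. Re (A $$ (i,j) * A $$ (j,i)))"
    by (intro sum_mono) auto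
  also have "\<dots> = Re (mtrace (A * A))" by (simp add: mtrace_square[OF A] Re_sum)
  finally show ?thesis .
qed

lemma sum_squares_split_lower_bound:
  fixes y :: "'a \<Rightarrow> real"
  assumes "finite I" and "A \<subseteq> I"
  shows "card (I - A) * (\<Sum>i\<in>A. y i)\<^sup>2 + card A * (\<Sum>i\<in>I - A. y i)\<^sup>2
           \<le> card A * card (I - A) * (\<Sum>i\<in>I. (y i)\<^sup>2)"
proof -
  have "card (I - A) * (\<Sum>i\<in>A. y i)\<^sup>2 \<le> card (I - A) * (card A * (\<Sum>i\<in>A. (y i)\<^sup>2))"
    using sum_squared_le_sum_of_squares[of y A] by (intro mult_left_mono) (auto simp: mult.commute)
  moreover have "card A * (\<Sum>i\<in>I - A. y i)\<^sup>2 \<le> card A * (card (I - A) * (\<Sum>i\<in>I - A. (y i)\<^sup>2))"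
    using sum_squared_le_sum_of_squares[of y "I - A"] by (intro mult_left_mono) (auto simp: mult.commute)
  moreover have "(\<Sum>i\<in>I. (y i)\<^sup>2) = (\<Sum>i\<in>I - A. (y i)\<^sup>2) + (\<Sum>i\<in>A. (y i)\<^sup>2)"
    using assms by (simp add: sum.subset_diff)
  ultimately show ?thesis by (simp add: algebra_simps)
qed

text \<open>\<open>Tr ((|0\<rangle>\<langle>0| \<otimes> I) \<rho>)\<close>: in the index convention of \<^const>\<open>kron\<close>, \<open>r = 0\<close> means index \<open>< d\<close>.\<close>
definition proj0_weight :: "nat \<Rightarrow> complex mat \<Rightarrow> real" where
  "proj0_weight d \<rho> = Re (\<Sum>k<d. \<rho> $$ (k,k))"

lemma proj0_weight_bounds:
  assumes "feasible d t \<rho>" and "0 < d"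
  shows "proj0_weight d \<rho> \<le> 1"
    and "(real d * proj0_weight d \<rho> - 1)\<^sup>2 \<le> (t * (real d)\<^sup>2 - 1) * (real d - 1)"
proof -
  let ?n = "d * d" and ?w = "proj0_weight d \<rho>"
  have psd: "psd ?n \<rho>" and tr: "mtrace \<rho> = 1" and purity: "mtrace (\<rho> * \<rho>) \<le> complex_of_real t"
    using assms(1) unfolding feasible_def density_def by auto
  have \<rho>: "\<rho> \<in> carrier_mat ?n ?n" using psd unfolding psd_def by simp
  define y where "y i = Re (\<rho> $$ (i,i))" for i
  have "d \<le> ?n" using assms(2) by simp
  then have outside: "{..<?n} - {..<d} = {d..<?n}" and card_outside: "card {d..<?n} = d * d - d" by auto
  have w: "?w = (\<Sum>i<d. y i)" unfolding proj0_weight_def y_def by (simp add: Re_sum)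
  have "(\<Sum>i<?n. y i) = 1" using tr \<rho> unfolding mtrace_def y_def by (simp flip: Re_sum)
  then have rest: "(\<Sum>i\<in>{d..<?n}. y i) = 1 - ?w"
    using sum.subset_diff[of "{..<d}" "{..<?n}" y] \<open>d \<le> ?n\<close> outside w by simp
  have "0 \<le> (\<Sum>i\<in>{d..<?n}. y i)"
    using psd_diag_nonneg[OF psd] by (intro sum_nonneg) (simp add: y_def less_eq_complex_def)
  with rest show "?w \<le> 1" by simp
  have "(\<Sum>i<?n. (y i)\<^sup>2) \<le> t"
    using psd_sum_diag_squares_le_trace_square[OF psd] purity
    unfolding y_def by (simp add: less_eq_complex_def)
  then have "real d * (real d * (real d - 1)) * (\<Sum>i<?n. (y i)\<^sup>2) \<le> real d * (real d * (real d - 1)) * t"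
    using assms(2) by (intro mult_left_mono) auto
  moreover have "real (d * d - d) = real d * (real d - 1)"
    using \<open>d \<le> ?n\<close> by (simp add: of_nat_diff algebra_simps)
  ultimately have "real d * ((real d - 1) * ?w\<^sup>2 + (1 - ?w)\<^sup>2) \<le> real d * (real d * (real d - 1) * t)"
    using sum_squares_split_lower_bound[of "{..<?n}" "{..<d}" y] \<open>d \<le> ?n\<close>
    unfolding outside card_outside w[symmetric] rest
    by (simp add: algebra_simps)
  then show "(real d * ?w - 1)\<^sup>2 \<le> (t * (real d)\<^sup>2 - 1) * (real d - 1)"
    by (simp add: power2_eq_square algebra_simps)
qed

lemma basis_vec_entry0:
  assumes "orthonormal_basis d \<alpha>" and "k0 < d" and "\<alpha> k0 = unit_vec d 0" and "k < d"
  shows "\<alpha> k $ 0 = (if k = k0 then 1 else 0)"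
proof -
  have "\<alpha> k \<in> carrier_vec d" using assms unfolding orthonormal_basis_def by blast
  then have "\<alpha> k \<bullet>c \<alpha> k0 = \<alpha> k $ 0"
    using assms(2) unfolding assms(3) scalar_prod_def
    by (simp add: if_distrib[where f = cnj] if_distrib[where f = "\<lambda>x. _ * x"] cong: if_cong)
  then show ?thesis using assms unfolding orthonormal_basis_def by metis
qed

lemma max_ent_entry_mod0:
  assumes "orthonormal_basis d \<alpha>" and "k0 < d" and "\<alpha> k0 = unit_vec d 0"
    and "i < d * d" and "i mod d = 0"
  shows "max_ent d \<alpha> $ i = (if i = 0 then 1 / complex_of_real (sqrt (real d)) else 0)"
proof -
  have "i div d < d" using assms(4) by (simp add: less_mult_imp_div_less)
  have "(\<Sum>k<d. \<alpha> k $ (i div d) * \<alpha> k $ (i mod d)) = (\<Sum>k<d. if k = k0 then \<alpha> k0 $ (i div d) else 0)"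
    using basis_vec_entry0[OF assms(1-3)] assms(5) by (intro sum.cong) auto
  also have "\<dots> = \<alpha> k0 $ (i div d)" using assms(2) by simp
  also have "\<dots> = (if i = 0 then 1 else 0)"
    using assms(3,5) \<open>i div d < d\<close> by (auto simp: div_eq_0_iff)
  finally show ?thesis using assms(4) unfolding max_ent_def by simp
qed

lemma id_tensor_T_chan_entry:
  assumes "i < d * d" and "j < d * d"
  shows "id_tensor d (T_chan d) \<rho> $$ (i,j) =
    (if i mod d = 0 \<and> j mod d = 0 then (\<Sum>k<d. \<rho> $$ (i div d * d + k, j div d * d + k)) else 0)"
  using assms unfolding id_tensor_def T_chan_def proj0_def mtrace_def block_def
  by (auto simp: mod_less_divisor[of d i] dest: less_mult_imp_div_less)

lemma ent_fidelity_T_chan: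
  assumes "orthonormal_basis d \<alpha>" and "\<exists>k<d. \<alpha> k = unit_vec d 0"
  shows "ent_fidelity d (T_chan d) \<alpha> \<rho> = proj0_weight d \<rho> / real d"
proof -
  obtain k0 where k0: "k0 < d" "\<alpha> k0 = unit_vec d 0" using assms(2) by blast
  let ?M = "id_tensor d (T_chan d) \<rho>" and ?\<phi> = "max_ent d \<alpha>"
  have M: "?M \<in> carrier_mat (d * d) (d * d)" unfolding id_tensor_def by simp
  have \<phi>: "?\<phi> \<in> carrier_vec (d * d)" unfolding max_ent_def by simp
  have "?M $$ (i,j) * ?\<phi> $ j * cnj (?\<phi> $ i) = 0"
    if "i < d * d" "j < d * d" "i \<noteq> 0 \<or> j \<noteq> 0" for i j
    using that id_tensor_T_chan_entry[OF that(1,2)]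
      max_ent_entry_mod0[OF assms(1) k0 that(1)] max_ent_entry_mod0[OF assms(1) k0 that(2)]
    by auto
  then have "(?M *\<^sub>v ?\<phi>) \<bullet>c ?\<phi> = ?M $$ (0,0) * ?\<phi> $ 0 * cnj (?\<phi> $ 0)"
    using k0(1) by (subst quadratic_form_expand[OF M \<phi>], subst sum_sum_restrict[where S = "{0}"]) auto
  also have "\<dots> = (\<Sum>k<d. \<rho> $$ (k,k)) / complex_of_real (real d)"
    using k0(1) id_tensor_T_chan_entry[of 0 d 0] max_ent_entry_mod0[OF assms(1) k0, of 0]
    by (simp flip: of_real_mult)
  finally show ?thesis
    unfolding ent_fidelity_def proj0_weight_def by (simp add: Re_divide_of_real)
qed

lemma sum_sum_diagonal:
  fixes f :: "nat \<Rightarrow> nat \<Rightarrow> 'a::comm_monoid_add"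
  assumes "\<And>i j. i < n \<Longrightarrow> j < n \<Longrightarrow> i \<noteq> j \<Longrightarrow> f i j = 0"
  shows "(\<Sum>i<n. \<Sum>j<n. f i j) = (\<Sum>i<n. f i i)"
proof (rule sum.cong[OF refl])
  fix i assume "i \<in> {..<n}"
  then show "(\<Sum>j<n. f i j) = f i i"
    using assms by (subst sum.mono_neutral_right[of "{..<n}" "{i}"]) auto
qed

context
  fixes A :: "complex mat" and n :: nat and c :: "nat \<Rightarrow> real"
  assumes carrier: "A \<in> carrier_mat n n"
    and diagonal: "\<And>i j. i < n \<Longrightarrow> j < n \<Longrightarrow> A $$ (i,j) = (if i = j then complex_of_real (c i) else 0)"
begin

lemma psd_diagonal:
  assumes "\<And>i. i < n \<Longrightarrow> 0 \<le> c i"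
  shows "psd n A"
  unfolding psd_def
proof (intro conjI ballI carrier)
  fix v :: "complex vec" assume v: "v \<in> carrier_vec n"
  have "(A *\<^sub>v v) \<bullet>c v = (\<Sum>i<n. complex_of_real (c i) * (v $ i * cnj (v $ i)))"
    by (subst quadratic_form_expand[OF carrier v], subst sum_sum_diagonal)
       (auto simp: diagonal mult.assoc)
  also have "0 \<le> \<dots>"
    using assms by (intro sum_nonneg) (simp add: complex_mult_cnj less_eq_complex_def flip: of_real_mult)
  finally show "0 \<le> (A *\<^sub>v v) \<bullet>c v" .
qed

lemma mtrace_diagonal: "mtrace A = complex_of_real (\<Sum>i<n. c i)"
  using carrier unfolding mtrace_def by (simp add: diagonal)

lemma mtrace_square_diagonal: "mtrace (A * A) = complex_of_real (\<Sum>i<n. (c i)\<^sup>2)"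
  by (subst mtrace_square[OF carrier], subst sum_sum_diagonal) (auto simp: diagonal power2_eq_square)

end

lemma kron_proj0_carrier:
  assumes "A \<in> carrier_mat d d"
  shows "kron (proj0 d) A \<in> carrier_mat (d * d) (d * d)"
  using assms unfolding kron_def proj0_def by simp

lemma kron_proj0_entry:
  assumes "A \<in> carrier_mat d d" and "i < d * d" and "j < d * d"
  shows "kron (proj0 d) A $$ (i,j) = (if i < d \<and> j < d then A $$ (i,j) else 0)"
proof -
  have "i div d < d" "j div d < d" using assms(2,3) by (simp_all add: less_mult_imp_div_less)
  then show ?thesis using assms unfolding kron_def proj0_def by (auto simp: div_eq_0_iff)
qed

lemma less_imp_less_square: "k < d \<Longrightarrow> k < d * (d::nat)"
  by (metis le_square order_less_le_trans)

lemma psd_kron_proj0: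
  assumes "psd d A"
  shows "psd (d * d) (kron (proj0 d) A)"
  unfolding psd_def
proof (intro conjI ballI)
  have A: "A \<in> carrier_mat d d" using assms unfolding psd_def by simp
  then show K: "kron (proj0 d) A \<in> carrier_mat (d * d) (d * d)" by (rule kron_proj0_carrier)
  fix v :: "complex vec" assume v: "v \<in> carrier_vec (d * d)"
  define w where "w = vec d (\<lambda>i. v $ i)"
  have "(kron (proj0 d) A *\<^sub>v v) \<bullet>c v = (A *\<^sub>v w) \<bullet>c w"
    by (simp add: quadratic_form_expand[OF K v] quadratic_form_expand[OF A] w_def,
        subst sum_sum_restrict[where S = "{..<d}"])
       (auto simp: kron_proj0_entry[OF A] less_imp_less_square)
  also have "0 \<le> \<dots>" using assms unfolding psd_def w_def by simp
  finally show "0 \<le> (kron (proj0 d) A *\<^sub>v v) \<bullet>c v" .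
qed

lemma proj0_weight_kron_proj0:
  assumes "A \<in> carrier_mat d d"
  shows "proj0_weight d (kron (proj0 d) A) = Re (mtrace A)"
  using assms unfolding proj0_weight_def mtrace_def
  by (auto simp: kron_proj0_entry less_imp_less_square intro!: arg_cong[where f = Re] sum.cong)

lemma mtrace_kron_proj0:
  assumes "A \<in> carrier_mat d d"
  shows "mtrace (kron (proj0 d) A) = mtrace A"
  unfolding mtrace_def carrier_matD(1)[OF assms] carrier_matD(1)[OF kron_proj0_carrier[OF assms]]
  by (subst sum.mono_neutral_right[of "{..<d * d}" "{..<d}"])
     (auto simp: kron_proj0_entry[OF assms] less_imp_less_square)

lemma mtrace_square_kron_proj0:
  assumes "A \<in> carrier_mat d d"
  shows "mtrace (kron (proj0 d) A * kron (proj0 d) A) = mtrace (A * A)"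
  by (simp add: mtrace_square[OF kron_proj0_carrier[OF assms]] mtrace_square[OF assms],
      subst sum_sum_restrict[where S = "{..<d}"])
     (auto simp: kron_proj0_entry[OF assms] less_imp_less_square)

definition depolarized_proj0 :: "nat \<Rightarrow> real \<Rightarrow> complex mat" where
  "depolarized_proj0 d k = complex_of_real ((1 - k) / (real d)\<^sup>2) \<cdot>\<^sub>m 1\<^sub>m (d * d)
     + complex_of_real k \<cdot>\<^sub>m kron (proj0 d) (complex_of_real (1 / real d) \<cdot>\<^sub>m 1\<^sub>m d)"

lemma depolarized_proj0_carrier: "depolarized_proj0 d k \<in> carrier_mat (d * d) (d * d)"
  unfolding depolarized_proj0_def kron_def proj0_def by simp

lemma depolarized_proj0_entry:
  assumes "i < d * d" and "j < d * d"
  shows "depolarized_proj0 d k $$ (i,j) =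
    (if i = j then complex_of_real ((1 - k) / (real d)\<^sup>2 + (if i < d then k / real d else 0)) else 0)"
  using assms kron_proj0_entry[OF one_carrier_mat[THEN smult_carrier_mat] assms]
  unfolding depolarized_proj0_def by (auto simp: kron_def proj0_def)

lemma proj0_weight_depolarized_proj0:
  assumes "0 < d"
  shows "proj0_weight d (depolarized_proj0 d k) = (1 + k * (real d - 1)) / real d"
proof -
  have "proj0_weight d (depolarized_proj0 d k) = real d * ((1 - k) / (real d)\<^sup>2 + k / real d)"
    unfolding proj0_weight_def by (simp add: depolarized_proj0_entry less_imp_less_square Re_sum)
  also have "\<dots> = (1 + k * (real d - 1)) / real d"
    using assms by (simp add: field_simps power2_eq_square)
  finally show ?thesis .
qed

lemma feasible_depolarized_proj0:
  assumes "0 < d" and "0 \<le> k" and "k \<le> 1" and "(1 + k\<^sup>2 * (real d - 1)) / (real d)\<^sup>2 \<le> t"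
  shows "feasible d t (depolarized_proj0 d k)"
proof -
  define a where "a = (1 - k) / (real d)\<^sup>2"
  define b where "b = k / real d"
  define c where "c i = a + (if i < d then b else 0)" for i
  have diagonal: "depolarized_proj0 d k $$ (i,j) = (if i = j then complex_of_real (c i) else 0)"
    if "i < d * d" "j < d * d" for i j
    using depolarized_proj0_entry[OF that] unfolding c_def a_def b_def by simp
  have block: "(\<Sum>i<d * d. if i < d then f i else 0) = (\<Sum>i<d. f i)" for f :: "nat \<Rightarrow> real"
    by (subst sum.mono_neutral_right[of "{..<d * d}" "{..<d}"]) (auto simp: less_imp_less_square)
  have "(\<Sum>i<d * d. c i) = real d * real d * a + real d * b"
    unfolding c_def sum.distrib block by simp
  also have "\<dots> = 1" using assms(1) unfolding a_def b_def by (simp add: field_simps power2_eq_square)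
  finally have trace: "(\<Sum>i<d * d. c i) = 1" .
  have "(c i)\<^sup>2 = a\<^sup>2 + (if i < d then 2 * a * b + b\<^sup>2 else 0)" for i
    unfolding c_def by (simp add: power2_sum)
  then have "(\<Sum>i<d * d. (c i)\<^sup>2) = real d * real d * a\<^sup>2 + real d * (2 * a * b + b\<^sup>2)"
    by (simp add: sum.distrib block)
  also have "\<dots> = (1 + k\<^sup>2 * (real d - 1)) / (real d)\<^sup>2"
    using assms(1) unfolding a_def b_def by (simp add: field_simps power2_eq_square)
  finally have purity: "(\<Sum>i<d * d. (c i)\<^sup>2) \<le> t" using assms(4) by simp
  have "0 \<le> c i" for i using assms(1-3) unfolding c_def a_def b_def by simp
  then show ?thesis
    unfolding feasible_def density_def
    using psd_diagonal[OF depolarized_proj0_carrier diagonal]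
      mtrace_diagonal[OF depolarized_proj0_carrier diagonal]
      mtrace_square_diagonal[OF depolarized_proj0_carrier diagonal]
      trace purity by (simp add: less_eq_complex_def)
qed

lemma depolarizing_weight_for_purity:
  fixes d t :: real
  assumes "1 < d" and "1 / d\<^sup>2 \<le> t" and "t \<le> 1 / d"
  defines "k \<equiv> sqrt ((t * d\<^sup>2 - 1) / (d - 1))"
  shows "0 \<le> k" and "k \<le> 1" and "(1 + k\<^sup>2 * (d - 1)) / d\<^sup>2 = t"
    and "k * (d - 1) = sqrt ((t * d\<^sup>2 - 1) * (d - 1))"
proof -
  have lo: "0 \<le> t * d\<^sup>2 - 1" using assms(1,2) by (simp add: field_simps)
  have "t * d \<le> 1" using assms(1,3) by (simp add: field_simps)
  then have hi: "t * d\<^sup>2 - 1 \<le> d - 1"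
    using assms(1) mult_right_mono[of "t * d" 1 d] by (simp add: power2_eq_square mult.assoc)
  show "0 \<le> k" unfolding k_def using lo assms(1) by simp
  show "k \<le> 1" unfolding k_def using lo hi assms(1) by simp
  show "(1 + k\<^sup>2 * (d - 1)) / d\<^sup>2 = t" unfolding k_def using lo assms(1) by simp
  have "k * (d - 1) = sqrt ((t * d\<^sup>2 - 1) / (d - 1) * (d - 1)\<^sup>2)"
    unfolding k_def real_sqrt_mult using assms(1) by simp
  then show "k * (d - 1) = sqrt ((t * d\<^sup>2 - 1) * (d - 1))"
    using assms(1) by (simp add: power2_eq_square)
qed

lemma O_t_eqI:
  assumes "feasible d t \<sigma>" and "ent_fidelity d N \<alpha> \<sigma> = v"
    and "\<And>\<rho>. feasible d t \<rho> \<Longrightarrow> ent_fidelity d N \<alpha> \<rho> \<le> v"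
  shows "O_t d N \<alpha> t = v"
  unfolding O_t_def using assms by (intro cSup_eq_maximum) auto

context
  fixes d :: nat and \<alpha> :: "nat \<Rightarrow> complex vec"
  assumes basis: "orthonormal_basis d \<alpha>" and zero_in_basis: "\<exists>k<d. \<alpha> k = unit_vec d 0"
    and two_le_dim: "2 \<le> d"
begin

lemma ent_fidelity_T_chan_le_inv_dim:
  assumes "feasible d t \<rho>"
  shows "ent_fidelity d (T_chan d) \<alpha> \<rho> \<le> 1 / real d"
  using proj0_weight_bounds(1)[OF assms] two_le_dim
  by (simp add: ent_fidelity_T_chan[OF basis zero_in_basis] divide_right_mono)

lemma ent_fidelity_T_chan_le_purity_bound:
  assumes "feasible d t \<rho>"
  shows "ent_fidelity d (T_chan d) \<alpha> \<rho> \<le> (1 + sqrt ((t * (real d)\<^sup>2 - 1) * (real d - 1))) / (real d)\<^sup>2"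
  using real_le_rsqrt[OF proj0_weight_bounds(2)[OF assms]] two_le_dim
  by (simp add: ent_fidelity_T_chan[OF basis zero_in_basis] field_simps power2_eq_square)

lemma kron_proj0_attains_inv_dim:
  assumes "density d \<rho>a" and "mtrace (\<rho>a * \<rho>a) \<le> complex_of_real t"
  shows "feasible d t (kron (proj0 d) \<rho>a)"
    and "ent_fidelity d (T_chan d) \<alpha> (kron (proj0 d) \<rho>a) = 1 / real d"
proof -
  have "psd d \<rho>a" "\<rho>a \<in> carrier_mat d d" "mtrace \<rho>a = 1"
    using assms(1) unfolding density_def psd_def by auto
  then show "feasible d t (kron (proj0 d) \<rho>a)"
    and "ent_fidelity d (T_chan d) \<alpha> (kron (proj0 d) \<rho>a) = 1 / real d"
    using assms(2) unfolding feasible_def density_def ent_fidelity_T_chan[OF basis zero_in_basis]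
    by (simp_all add: psd_kron_proj0 mtrace_kron_proj0 mtrace_square_kron_proj0 proj0_weight_kron_proj0)
qed

lemma O_t_T_chan_eq_inv_dim:
  assumes "1 / real d \<le> t"
  shows "O_t d (T_chan d) \<alpha> t = 1 / real d"
proof (rule O_t_eqI[OF _ _ ent_fidelity_T_chan_le_inv_dim])
  show "feasible d t (depolarized_proj0 d 1)"
    using assms two_le_dim by (intro feasible_depolarized_proj0) (auto simp: power2_eq_square)
  show "ent_fidelity d (T_chan d) \<alpha> (depolarized_proj0 d 1) = 1 / real d"
    using two_le_dim
    by (simp add: ent_fidelity_T_chan[OF basis zero_in_basis] proj0_weight_depolarized_proj0)
qed

lemma depolarized_proj0_attains_O_t:
  assumes "1 / (real d)\<^sup>2 \<le> t" and "t \<le> 1 / real d"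
  defines "k \<equiv> sqrt ((t * (real d)\<^sup>2 - 1) / (real d - 1))"
    and "v \<equiv> (1 + sqrt ((t * (real d)\<^sup>2 - 1) * (real d - 1))) / (real d)\<^sup>2"
  shows "feasible d t (depolarized_proj0 d k)"
    and "ent_fidelity d (T_chan d) \<alpha> (depolarized_proj0 d k) = v"
    and "O_t d (T_chan d) \<alpha> t = v"
proof -
  have d: "0 < d" "1 < real d" using two_le_dim by auto
  note k = depolarizing_weight_for_purity[OF d(2) assms(1,2), folded k_def]
  show feasible: "feasible d t (depolarized_proj0 d k)"
    using feasible_depolarized_proj0[OF d(1) k(1,2)] k(3) by simp
  have "ent_fidelity d (T_chan d) \<alpha> (depolarized_proj0 d k) = (1 + k * (real d - 1)) / (real d)\<^sup>2"
    using d(1)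
    by (simp add: ent_fidelity_T_chan[OF basis zero_in_basis] proj0_weight_depolarized_proj0 power2_eq_square)
  also have "\<dots> = v" unfolding v_def k(4) ..
  finally show attained: "ent_fidelity d (T_chan d) \<alpha> (depolarized_proj0 d k) = v" .
  show "O_t d (T_chan d) \<alpha> t = v"
    using O_t_eqI[OF feasible attained ent_fidelity_T_chan_le_purity_bound[of t, folded v_def]] .
qed

end

theorem mainTheorem6:
  fixes d :: nat and t :: real and \<alpha> :: "nat \<Rightarrow> complex vec"
  assumes "d \<ge> 2"
    and "orthonormal_basis d \<alpha>" and "\<exists>k<d. \<alpha> k = unit_vec d 0"
    and "1 / (real d)^2 \<le> t" and "t \<le> 1"
  shows "(1 / real d \<le> t \<longrightarrow>
            O_t d (T_chan d) \<alpha> t = 1 / real d \<and>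
            (\<forall>\<rho>a. density d \<rho>a \<and> mtrace (\<rho>a * \<rho>a) \<le> complex_of_real t \<longrightarrow>
               feasible d t (kron (proj0 d) \<rho>a) \<and>
               ent_fidelity d (T_chan d) \<alpha> (kron (proj0 d) \<rho>a) = 1 / real d))
       \<and> (t \<le> 1 / real d \<longrightarrow>
            (let k = sqrt ((t * (real d)^2 - 1) / (real d - 1));
                 \<sigma> = complex_of_real ((1 - k) / (real d)^2) \<cdot>\<^sub>m 1\<^sub>m (d * d)
                     + complex_of_real k \<cdot>\<^sub>m kron (proj0 d) (complex_of_real (1 / real d) \<cdot>\<^sub>m 1\<^sub>m d);
                 v = (1 + sqrt ((t * (real d)^2 - 1) * (real d - 1))) / (real d)^2
             in O_t d (T_chan d) \<alpha> t = v \<and> feasible d t \<sigma> \<and> ent_fidelity d (T_chan d) \<alpha> \<sigma> = v))"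
  unfolding Let_def depolarized_proj0_def[symmetric]
  using O_t_T_chan_eq_inv_dim[OF assms(2,3,1)] kron_proj0_attains_inv_dim[OF assms(2,3,1)]
    depolarized_proj0_attains_O_t[OF assms(2,3,1,4)]
  by blast

end
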